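(* Let $S(n)=(3n+1)/2^{v_2(3n+1)}$ be the odd-to-odd Syracuse map, let $m\ge 0$ be an integer, $q=8m+3$ and $n=64q+57=512m+249$. Then $S^4(n)=648m+317$, so $3S^4(n)+1=8(243m+119)$. Let $w=v_2(243m+119)$. Then $S^5(n)=(243m+119)/2^w$, and $S^5(n)\equiv 57\pmod{64}$ if and only if $243m+119\equiv 57\cdot 2^w\pmod{2^{w+6}}$. For each $w\ge 0$ there is a unique residue class $m\equiv a_w\pmod{2^{w+6}}$, namely $a_w=243^{-1}(57\cdot 2^w-119)\bmod 2^{w+6}$, on which this return occurs with $v_2(243m+119)=w$; these classes are pairwise disjoint and their union has natural density $\sum_{w\ge 0}2^{-(w+6)}=1/32$ in the set of nonnegative integers $m$. Within the class for a given $w$, writing $m=a_w+2^{w+6}t$ ($t\ge 0$), the destination quotient $q'=(S^5(n)-57)/64$ has the form $q'=k_0(w)+243t$ for an integer $k_0(w)$ depending only on $w$; hence $q'\bmod 64$ is exactly uniformly distributed as $t$ ranges over any $64$ consecutive integers.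
   Context: $v_2$ is the $2$-adic valuation; $243^{-1}$ denotes the inverse of $243$ modulo $2^{w+6}$. *)

theory Defs
  imports Complex_Main "HOL-Number_Theory.Number_Theory"
begin

definition v2 :: "nat \<Rightarrow> nat" where
  "v2 x = multiplicity (2::nat) x"

definition syr :: "nat \<Rightarrow> nat" where
  "syr n = (3*n+1) div 2 ^ v2 (3*n+1)"

definition inv_mod :: "int \<Rightarrow> int \<Rightarrow> int" where
  "inv_mod a M = (THE x. 0 \<le> x \<and> x < M \<and> [a * x = 1] (mod M))"

definition a_res :: "nat \<Rightarrow> int" where
  "a_res w = (inv_mod 243 (2^(w+6)) * (57 * 2^w - 119)) mod 2^(w+6)"

definition qdest :: "nat \<Rightarrow> int" where
  "qdest m = (int ((syr ^^ 5) (512*m+249)) - 57) div 64"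

end

(* The first four Syracuse steps from 512m+249 divide by 2, 2, 4, 2 independently of m, reaching
   648m+317; the fifth divides 8(243m+119) by 2^(3+w), w = v2(243m+119).  A positive x satisfies
   x = 57 * 2^w (mod 2^(w+6)) iff v2 x = w and x/2^w = 57 (mod 64), and since 243 is a unit modulo
   every power of 2 this congruence in m is a single residue class mod 2^(w+6).  The classes with
   w <= W have total density sum_{w<=W} 2^-(w+6), while all classes with w > W lie in the residue
   class 243m+119 = 0 (mod 2^(W+1)) of density 2^-(W+1); letting W grow squeezes the density to 1/32.
   Inside the class of w, S^5 grows by 64*243 when t grows by 1, so q' = k0 + 243t with 243 a unit
   mod 64. *)

theory Submission
  imports Defs
begin

section \<open>2-adic valuations and congruences\<close>

lemma v2_mult_odd: "odd (u::nat) \<Longrightarrow> v2 (2^k * u) = k"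
  unfolding v2_def by (rule multiplicity_decomposeI) auto

lemma v2_decompose:
  assumes "(x::nat) > 0"
  shows "x = 2^v2 x * (x div 2^v2 x)" and "odd (x div 2^v2 x)"
  using multiplicity_dvd[of "2::nat" x] multiplicity_decompose[of x "2::nat"] assms
  unfolding v2_def by auto

lemma v2_dvd_iff: "(x::nat) > 0 \<Longrightarrow> 2^k dvd x \<longleftrightarrow> k \<le> v2 x"
  unfolding v2_def by (rule power_dvd_iff_le_multiplicity) auto

lemma cong_odd_mult_pow2_iff:
  fixes x c :: nat
  assumes "x > 0" "odd c" "c < 2^k"
  shows "[x = c * 2^w] (mod 2^(w+k)) \<longleftrightarrow> v2 x = w \<and> (x div 2^w) mod 2^k = c"
proof -
  have c_mod: "(c * 2^w) mod 2^(w+k) = 2^w * c"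
    using assms(3) by (simp add: power_add mult.commute)
  show ?thesis
  proof
    assume "[x = c * 2^w] (mod 2^(w+k))"
    then have "x mod 2^(w+k) = 2^w * c" using c_mod by (simp add: cong_def)
    then have x: "x = 2^w * (2^k * (x div 2^(w+k)) + c)"
      using div_mult_mod_eq[of x "2^(w+k)"] by (simp add: power_add algebra_simps)
    have "k > 0" using assms(2,3) by (cases k) auto
    then have "odd (2^k * (x div 2^(w+k)) + c)" using assms(2) by simp
    then have "v2 x = w" by (subst x) (rule v2_mult_odd)
    moreover have "(x div 2^w) mod 2^k = c"
      using assms(3) by (subst x) simp
    ultimately show "v2 x = w \<and> (x div 2^w) mod 2^k = c" ..
  next
    assume "v2 x = w \<and> (x div 2^w) mod 2^k = c"
    then have "x mod 2^(w+k) = 2^w * c"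
      using v2_decompose(1)[OF assms(1)] mod_mult_mult1[of "2^w" "x div 2^w" "2^k"]
      by (simp add: power_add)
    then show "[x = c * 2^w] (mod 2^(w+k))" using c_mod by (simp add: cong_def)
  qed
qed

lemma inv_mod_correct:
  fixes a M :: int
  assumes "coprime a M" "M > 0"
  shows "0 \<le> inv_mod a M" "inv_mod a M < M" "[a * inv_mod a M = 1] (mod M)"
proof -
  have "\<exists>!x. 0 \<le> x \<and> x < M \<and> [a * x = 1] (mod M)"
  proof (rule ex_ex1I)
    show "\<exists>x. 0 \<le> x \<and> x < M \<and> [a * x = 1] (mod M)"
      using assms coprime_iff_invertible'_int by blast
    fix x y assume x: "0 \<le> x \<and> x < M \<and> [a * x = 1] (mod M)"
      and y: "0 \<le> y \<and> y < M \<and> [a * y = 1] (mod M)"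
    then have "[a * x = a * y] (mod M)" by (meson cong_sym cong_trans)
    then have "[x = y] (mod M)" using assms(1) cong_mult_lcancel by blast
    then show "x = y" using x y by (simp add: cong_def)
  qed
  then show "0 \<le> inv_mod a M" "inv_mod a M < M" "[a * inv_mod a M = 1] (mod M)"
    unfolding inv_mod_def by (metis (mono_tags, lifting) theI')+
qed

lemma cong_affine_iff:
  fixes a b c m M :: int
  assumes "coprime a M" "M > 0"
  shows "[a * m + b = c] (mod M) \<longleftrightarrow> m mod M = (inv_mod a M * (c - b)) mod M"
proof -
  define I where "I = inv_mod a M"
  have aI: "[I * a = 1] (mod M)" using inv_mod_correct(3)[OF assms] unfolding I_def by (simp add: mult.commute)
  then have "coprime I M" using coprime_iff_invertible_int by blast
  have "[I * (a * m) = m] (mod M)"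
    using cong_mult[OF aI cong_refl[of m]] by (simp add: mult.assoc)
  have "[a * m + b = c] (mod M) \<longleftrightarrow> [a * m = c - b] (mod M)"
    using cong_add_rcancel[of "a * m" b "c - b" M] by simp
  also have "\<dots> \<longleftrightarrow> [I * (a * m) = I * (c - b)] (mod M)"
    using cong_mult_lcancel[OF \<open>coprime I M\<close>] by simp
  also have "\<dots> \<longleftrightarrow> [m = I * (c - b)] (mod M)"
    using \<open>[I * (a * m) = m] (mod M)\<close> by (meson cong_sym cong_trans)
  finally show ?thesis unfolding I_def cong_def .
qed

lemma card_affine_mod_window:
  fixes a k r :: int and M t0 :: nat
  assumes "coprime a (int M)" "0 \<le> r" "r < int M"
  shows "card {t \<in> {t0..<t0+M}. (k + a * int t) mod int M = r} = 1"
proof -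
  define f where "f t = (k + a * int t) mod int M" for t
  define I where "I = {t0..<t0+M}"
  have "inj_on f I"
  proof (rule inj_onI)
    fix t t' assume "t \<in> I" "t' \<in> I" "f t = f t'"
    then have "[k + a * int t = k + a * int t'] (mod int M)" by (simp add: f_def cong_def)
    then have "[int t = int t'] (mod int M)"
      by (simp add: cong_add_lcancel cong_mult_lcancel[OF assms(1)])
    then have "int M dvd int t - int t'" by (simp add: cong_iff_dvd_diff)
    moreover have "\<bar>int t - int t'\<bar> < int M" using \<open>t \<in> I\<close> \<open>t' \<in> I\<close> unfolding I_def by auto
    ultimately show "t = t'" using dvd_imp_le_int[of "int t - int t'" "int M"] by fastforce
  qed
  have "f ` I = {0..<int M}"
  proof (rule card_subset_eq)
    show "f ` I \<subseteq> {0..<int M}" using assms(2,3) unfolding f_def by auto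
    show "card (f ` I) = card {0..<int M}" using card_image[OF \<open>inj_on f I\<close>] unfolding I_def by simp
  qed simp
  then obtain t1 where "t1 \<in> I" "f t1 = r" using assms(2,3) by (metis atLeastLessThan_iff imageE)
  then have "{t \<in> I. f t = r} = {t1}" using \<open>inj_on f I\<close> by (auto dest: inj_onD)
  then show ?thesis unfolding f_def I_def by simp
qed

section \<open>Natural density\<close>

definition relative_count :: "nat set \<Rightarrow> nat \<Rightarrow> real" where
  "relative_count S N = real (card {m \<in> {..<N}. m \<in> S}) / real N"

definition has_density :: "nat set \<Rightarrow> real \<Rightarrow> bool" where
  "has_density S d \<longleftrightarrow> relative_count S \<longlonglongrightarrow> d"

lemma relative_count_mono: "A \<subseteq> B \<Longrightarrow> relative_count A N \<le> relative_count B N"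
  unfolding relative_count_def by (intro divide_right_mono) (auto intro: card_mono)

lemma relative_count_Un_le: "relative_count (A \<union> B) N \<le> relative_count A N + relative_count B N"
proof -
  have "{m \<in> {..<N}. m \<in> A \<union> B} = {m \<in> {..<N}. m \<in> A} \<union> {m \<in> {..<N}. m \<in> B}" by auto
  then have "card {m \<in> {..<N}. m \<in> A \<union> B} \<le> card {m \<in> {..<N}. m \<in> A} + card {m \<in> {..<N}. m \<in> B}"
    by (metis card_Un_le)
  then show ?thesis unfolding relative_count_def add_divide_distrib[symmetric]
    by (intro divide_right_mono) simp_all
qed

lemma relative_count_Un_disjoint:
  "A \<inter> B = {} \<Longrightarrow> relative_count (A \<union> B) N = relative_count A N + relative_count B N"
proof -
  assume "A \<inter> B = {}"
  then have "card {m \<in> {..<N}. m \<in> A \<union> B} = card {m \<in> {..<N}. m \<in> A} + card {m \<in> {..<N}. m \<in> B}"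
    by (subst card_Un_disjoint[symmetric]) (auto intro: arg_cong[where f=card])
  then show ?thesis unfolding relative_count_def by (simp add: add_divide_distrib)
qed

lemma has_density_Un_disjoint:
  assumes "A \<inter> B = {}" "has_density A a" "has_density B b"
  shows "has_density (A \<union> B) (a + b)"
proof -
  have "relative_count (A \<union> B) = (\<lambda>N. relative_count A N + relative_count B N)"
    using relative_count_Un_disjoint[OF assms(1)] by (rule ext)
  then show ?thesis using assms(2,3) unfolding has_density_def by (simp add: tendsto_add)
qed

lemma has_density_approx:
  assumes "\<And>W. L W \<subseteq> S" "\<And>W. S \<subseteq> L W \<union> T W"
    and "\<And>W. has_density (L W) (l W)" "\<And>W. has_density (T W) (e W)"
    and "l \<longlonglongrightarrow> d" "e \<longlonglongrightarrow> 0"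
  shows "has_density S d"
  unfolding has_density_def
proof (rule LIMSEQ_I)
  fix r :: real assume "r > 0"
  then have "r / 4 > 0" by simp
  obtain W1 where W1: "\<And>W. W \<ge> W1 \<Longrightarrow> norm (l W - d) < r / 4"
    using LIMSEQ_D[OF assms(5) \<open>r / 4 > 0\<close>] by blast
  obtain W2 where W2: "\<And>W. W \<ge> W2 \<Longrightarrow> norm (e W - 0) < r / 4"
    using LIMSEQ_D[OF assms(6) \<open>r / 4 > 0\<close>] by blast
  define W where "W = max W1 W2"
  obtain N1 where N1: "\<And>N. N \<ge> N1 \<Longrightarrow> norm (relative_count (L W) N - l W) < r / 4"
    using LIMSEQ_D[OF assms(3)[unfolded has_density_def] \<open>r / 4 > 0\<close>] by blast
  obtain N2 where N2: "\<And>N. N \<ge> N2 \<Longrightarrow> norm (relative_count (T W) N - e W) < r / 4"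
    using LIMSEQ_D[OF assms(4)[unfolded has_density_def] \<open>r / 4 > 0\<close>] by blast
  show "\<exists>N0. \<forall>N\<ge>N0. norm (relative_count S N - d) < r"
  proof (intro exI allI impI)
    fix N assume "N \<ge> max N1 N2"
    have "relative_count (L W) N \<le> relative_count S N"
      using assms(1) by (rule relative_count_mono)
    moreover have "relative_count S N \<le> relative_count (L W) N + relative_count (T W) N"
      using relative_count_mono[OF assms(2)] relative_count_Un_le order_trans by blast
    ultimately show "norm (relative_count S N - d) < r"
      using W1[of W] W2[of W] N1[of N] N2[of N] \<open>N \<ge> max N1 N2\<close>
      unfolding W_def real_norm_def abs_less_iff by simp
  qed
qed

lemma card_residue_class_below_multiple:
  fixes M a k :: nat
  assumes "a < M"
  shows "card {m \<in> {..<k*M}. m mod M = a} = k"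
proof -
  have "{m \<in> {..<k*M}. m mod M = a} = (\<lambda>i. a + M*i) ` {..<k}"
  proof (intro equalityI subsetI)
    fix m assume "m \<in> {m \<in> {..<k*M}. m mod M = a}"
    then have "m div M < k" "m = a + M * (m div M)"
      using less_mult_imp_div_less[of m k M] div_mult_mod_eq[of m M] by (auto simp: mult.commute)
    then show "m \<in> (\<lambda>i. a + M*i) ` {..<k}" by blast
  next
    fix m assume "m \<in> (\<lambda>i. a + M*i) ` {..<k}"
    then obtain i where "i < k" "m = a + M*i" by auto
    moreover have "a + M*i < M*(i+1)" using assms by simp
    moreover have "M*(i+1) \<le> M*k" using \<open>i < k\<close> by (intro mult_le_mono2) simp
    ultimately show "m \<in> {m \<in> {..<k*M}. m mod M = a}" using assms by (simp add: mult.commute)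
  qed
  moreover have "inj_on (\<lambda>i. a + M*i) {..<k}" using assms by (auto simp: inj_on_def)
  ultimately show ?thesis by (simp add: card_image)
qed

lemma card_residue_class_bounds:
  fixes M a N :: nat
  assumes "a < M"
  shows "N div M \<le> card {m \<in> {..<N}. m mod M = a}"
    and "card {m \<in> {..<N}. m mod M = a} \<le> N div M + 1"
proof -
  have "(N div M) * M \<le> N" by (rule div_times_less_eq_dividend)
  then have "card {m \<in> {..<(N div M) * M}. m mod M = a} \<le> card {m \<in> {..<N}. m mod M = a}"
    by (intro card_mono) (auto intro: order_less_le_trans)
  then show "N div M \<le> card {m \<in> {..<N}. m mod M = a}"
    using card_residue_class_below_multiple[OF assms] by simp
  have "N mod M < M" using assms by simp
  then have "N < N div M * M + M" using div_mult_mod_eq[of N M] by linarith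
  then have "N < (N div M + 1) * M" by simp
  then have "card {m \<in> {..<N}. m mod M = a} \<le> card {m \<in> {..<(N div M + 1) * M}. m mod M = a}"
    by (intro card_mono) auto
  then show "card {m \<in> {..<N}. m mod M = a} \<le> N div M + 1"
    using card_residue_class_below_multiple[OF assms, of "N div M + 1"] by linarith
qed

lemma has_density_residue_class:
  fixes M a :: nat
  assumes "a < M"
  shows "has_density {m. m mod M = a} (1 / M)"
proof -
  have M: "real M > 0" using assms by simp
  have bounds: "1 / M - 1 / N \<le> relative_count {m. m mod M = a} N \<and>
                relative_count {m. m mod M = a} N \<le> 1 / M + 1 / N" if "N > 0" for N
  proof -
    define c where "c = real (card {m \<in> {..<N}. m mod M = a})"
    have "real N / M = real (N div M) + real (N mod M) / M" by (rule of_nat_of_nat_div_aux)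
    moreover have "real (N mod M) / M < 1" using M assms by simp
    moreover have "real (N div M) \<le> c" "c \<le> real (N div M) + 1"
      using card_residue_class_bounds[OF assms, of N] unfolding c_def by linarith+
    moreover have "real (N mod M) / M \<ge> 0" by simp
    ultimately have "real N / M - 1 \<le> c" "c \<le> real N / M + 1" by linarith+
    then have "(real N / M - 1) / N \<le> c / N" "c / N \<le> (real N / M + 1) / N"
      by (simp_all add: divide_right_mono)
    moreover have "(real N / M - 1) / N = 1 / M - 1 / N" "(real N / M + 1) / N = 1 / M + 1 / N"
      using that by (simp_all add: diff_divide_distrib add_divide_distrib)
    ultimately show ?thesis unfolding relative_count_def c_def by simp
  qed
  have lower: "(\<lambda>N. 1 / real M - 1 / real N) \<longlonglongrightarrow> 1 / M"
    using tendsto_diff[OF tendsto_const lim_1_over_n, of "1 / real M"] by simp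
  have upper: "(\<lambda>N. 1 / real M + 1 / real N) \<longlonglongrightarrow> 1 / M"
    using tendsto_add[OF tendsto_const lim_1_over_n, of "1 / real M"] by simp
  have "eventually (\<lambda>N. 1 / M - 1 / N \<le> relative_count {m. m mod M = a} N \<and>
                  relative_count {m. m mod M = a} N \<le> 1 / M + 1 / N) sequentially"
    using eventually_gt_at_top[of "0::nat"] by (rule eventually_mono) (rule bounds)
  then show ?thesis
    unfolding has_density_def eventually_conj_iff using tendsto_sandwich[OF _ _ lower upper] by blast
qed

lemma has_density_int_residue_class:
  fixes M r :: int
  assumes "0 \<le> r" "r < M"
  shows "has_density {m. int m mod M = r} (1 / M)"
proof -
  have "int m mod M = r \<longleftrightarrow> m mod nat M = nat r" for m
    using assms zmod_int[of m "nat M"] by auto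
  then have "{m. int m mod M = r} = {m. m mod nat M = nat r}" by simp
  then show ?thesis using has_density_residue_class[of "nat r" "nat M"] assms by simp
qed

section \<open>Syracuse orbit of 512m+249\<close>

lemma syr_eqI: "3*n+1 = 2^k * u \<Longrightarrow> odd u \<Longrightarrow> syr n = u"
  unfolding syr_def by (simp add: v2_mult_odd)

lemma syr_funpow4: "(syr ^^ 4) (512*m+249) = 648*m+317"
proof -
  have "syr (512*m+249) = 384*m+187" by (rule syr_eqI[where k=2]) auto
  moreover have "syr (384*m+187) = 576*m+281" by (rule syr_eqI[where k=1]) auto
  moreover have "syr (576*m+281) = 432*m+211" by (rule syr_eqI[where k=2]) auto
  moreover have "syr (432*m+211) = 648*m+317" by (rule syr_eqI[where k=1]) auto
  moreover have "(syr ^^ 4) n = syr (syr (syr (syr n)))" for n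
    by (simp add: numeral_eq_Suc)
  ultimately show ?thesis by simp
qed

lemma syr_funpow5: "(syr ^^ 5) (512*m+249) = (243*m+119) div 2 ^ v2 (243*m+119)"
proof -
  let ?x = "243*m+119"
  have "3 * (648*m+317) + 1 = 2^(3 + v2 ?x) * (?x div 2 ^ v2 ?x)"
    using v2_decompose(1)[of ?x] by (simp add: power_add)
  then have "syr (648*m+317) = ?x div 2 ^ v2 ?x"
    using v2_decompose(2)[of ?x] by (intro syr_eqI) auto
  moreover have "(syr ^^ 5) n = syr ((syr ^^ 4) n)" for n
    by (simp add: numeral_eq_Suc)
  ultimately show ?thesis by (simp add: syr_funpow4)
qed

lemma return_iff_cong:
  "(syr ^^ 5) (512*m+249) mod 64 = 57 \<longleftrightarrow>
     [243*m+119 = 57 * 2 ^ v2 (243*m+119)] (mod 2 ^ (v2 (243*m+119) + 6))"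
  using cong_odd_mult_pow2_iff[of "243*m+119" 57 6 "v2 (243*m+119)"] syr_funpow5 by simp

lemma a_res_bounds: "0 \<le> a_res w" "a_res w < 2^(w+6)"
  unfolding a_res_def by simp_all

lemma return_with_v2_iff:
  "((syr ^^ 5) (512*m+249) mod 64 = 57 \<and> v2 (243*m+119) = w) \<longleftrightarrow> int m mod 2^(w+6) = a_res w"
proof -
  have "((syr ^^ 5) (512*m+249) mod 64 = 57 \<and> v2 (243*m+119) = w) \<longleftrightarrow>
        [243*m+119 = 57 * 2^w] (mod 2^(w+6))"
    using cong_odd_mult_pow2_iff[of "243*m+119" 57 6 w] syr_funpow5 by auto
  also have "\<dots> \<longleftrightarrow> [243 * int m + 119 = 57 * 2^w] (mod 2^(w+6))"
    using cong_int_iff[of "243*m+119" "57 * 2^w" "2^(w+6)"] by simp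
  also have "\<dots> \<longleftrightarrow> int m mod 2^(w+6) = a_res w"
    unfolding a_res_def by (rule cong_affine_iff) simp_all
  finally show ?thesis .
qed

lemma return_residue_unique:
  "\<exists>!a::int. 0 \<le> a \<and> a < 2^(w+6) \<and>
     (\<forall>m::nat. ((syr ^^ 5) (512*m+249) mod 64 = 57 \<and> v2 (243*m+119) = w)
                 \<longleftrightarrow> int m mod 2^(w+6) = a)"
proof (rule ex1I[of _ "a_res w"])
  fix a :: int
  assume a: "0 \<le> a \<and> a < 2^(w+6) \<and>
     (\<forall>m::nat. ((syr ^^ 5) (512*m+249) mod 64 = 57 \<and> v2 (243*m+119) = w)
                 \<longleftrightarrow> int m mod 2^(w+6) = a)"
  then have "int (nat a) mod 2^(w+6) = a" by simp
  then show "a = a_res w" using a return_with_v2_iff by metis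
qed (use a_res_bounds return_with_v2_iff in blast)

lemma return_classes_disjoint:
  "w \<noteq> w' \<Longrightarrow> \<not> (int m mod 2^(w+6) = a_res w \<and> int m mod 2^(w'+6) = a_res w')"
  using return_with_v2_iff[of m w] return_with_v2_iff[of m w'] by auto

lemma return_iff_in_class:
  "(syr ^^ 5) (512*m+249) mod 64 = 57 \<longleftrightarrow> (\<exists>w. int m mod 2^(w+6) = a_res w)"
  using return_with_v2_iff by blast

lemma qdest_on_class_affine:
  "\<exists>k0::int. \<forall>t::nat. qdest (nat (a_res w) + 2^(w+6) * t) = k0 + 243 * int t"
proof -
  define a where "a = nat (a_res w)"
  define x where "x = 243*a+119"
  have in_class: "int (a + 2^(w+6) * t) mod 2^(w+6) = a_res w" for t
    using a_res_bounds[of w] unfolding a_def by simp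
  then have "v2 x = w" unfolding x_def using return_with_v2_iff[of a w] by simp
  then have "2^w dvd x" unfolding x_def using v2_dvd_iff[of x w] by (simp add: x_def)
  have "qdest (a + 2^(w+6) * t) = (int (x div 2^w) - 57) div 64 + 243 * int t" for t
  proof -
    let ?m = "a + 2^(w+6) * t"
    have "(syr ^^ 5) (512*?m+249) = (243*?m+119) div 2^w"
      using in_class[of t] return_with_v2_iff syr_funpow5 by metis
    also have "243*?m+119 = x + 2^w * (64 * 243 * t)"
      unfolding x_def by (simp add: power_add algebra_simps)
    finally have "(syr ^^ 5) (512*?m+249) = x div 2^w + 64 * 243 * t"
      using \<open>2^w dvd x\<close> by simp
    then show ?thesis unfolding qdest_def by simp
  qed
  then show ?thesis unfolding a_def by blast
qed

lemma qdest_uniform_mod_64: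
  assumes "0 \<le> r" "r < 64"
  shows "card {t \<in> {t0..<t0+64}. qdest (nat (a_res w) + 2^(w+6) * t) mod 64 = r} = 1"
proof -
  obtain k0 where "\<forall>t. qdest (nat (a_res w) + 2^(w+6) * t) = k0 + 243 * int t"
    using qdest_on_class_affine by blast
  moreover have "coprime (243::int) (int 64)"
    using coprime_power_right_iff[of "243::int" 2 6] by simp
  ultimately show ?thesis using card_affine_mod_window[of 243 64 r t0 k0] assms by simp
qed

lemma has_density_return_class: "has_density {m. int m mod 2^(w+6) = a_res w} (1 / 2^(w+6))"
  using has_density_int_residue_class[OF a_res_bounds[of w]] by simp

lemma has_density_return_classes_upto:
  "has_density {m. \<exists>w\<le>W. int m mod 2^(w+6) = a_res w} (\<Sum>w\<le>W. 1 / 2^(w+6))"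
proof (induction W)
  case 0
  then show ?case using has_density_return_class[of 0] by simp
next
  case (Suc W)
  have "{m. \<exists>w\<le>Suc W. int m mod 2^(w+6) = a_res w} =
        {m. \<exists>w\<le>W. int m mod 2^(w+6) = a_res w} \<union> {m. int m mod 2^(Suc W+6) = a_res (Suc W)}"
    by (auto simp: le_Suc_eq)
  moreover have "{m. \<exists>w\<le>W. int m mod 2^(w+6) = a_res w} \<inter> {m. int m mod 2^(Suc W+6) = a_res (Suc W)} = {}"
  proof (rule equals0I, elim IntE CollectE exE conjE)
    fix m w assume "w \<le> W" "int m mod 2^(w+6) = a_res w" "int m mod 2^(Suc W+6) = a_res (Suc W)"
    then show False using return_classes_disjoint[of w "Suc W" m] by simp
  qed
  ultimately show ?case
    using has_density_Un_disjoint[OF _ Suc.IH has_density_return_class[of "Suc W"]] by simp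
qed

lemma has_density_v2_above:
  "has_density {m. [243 * int m + 119 = 0] (mod 2^(W+1))} (1 / 2^(W+1))"
proof -
  define r :: int where "r = (inv_mod 243 (2^(W+1)) * (0 - 119)) mod 2^(W+1)"
  have "[243 * int m + 119 = 0] (mod 2^(W+1)) \<longleftrightarrow> int m mod 2^(W+1) = r" for m
    unfolding r_def by (rule cong_affine_iff) simp_all
  moreover have "0 \<le> r" "r < 2^(W+1)" unfolding r_def by simp_all
  ultimately show ?thesis using has_density_int_residue_class[of r "2^(W+1)"] by simp
qed

lemma return_class_v2_above:
  assumes "int m mod 2^(w+6) = a_res w" "W < w"
  shows "[243 * int m + 119 = 0] (mod 2^(W+1))"
proof -
  have "v2 (243*m+119) = w" using assms(1) return_with_v2_iff by blast
  then have "2^(W+1) dvd 243*m+119" using v2_dvd_iff[of "243*m+119" "W+1"] assms(2) by simp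
  then have "int (2^(W+1)) dvd int (243*m+119)" by (simp only: int_dvd_int_iff)
  then show ?thesis by (simp add: cong_0_iff)
qed

lemma geometric_sums_pow2_shift: "(\<lambda>w::nat. 1 / (2::real)^(w+6)) sums (1/32)"
proof -
  have "(\<lambda>w::nat. (1/64) * (1/2::real)^w) sums ((1/64) * (1 / (1 - 1/2)))"
    by (rule sums_mult) (rule geometric_sums, simp)
  moreover have "(\<lambda>w::nat. (1/64) * (1/2::real)^w) = (\<lambda>w::nat. 1 / (2::real)^(w+6))"
    by (rule ext) (simp add: power_add power_divide)
  ultimately show ?thesis by simp
qed

lemma has_density_returns: "has_density {m. \<exists>w. int m mod 2^(w+6) = a_res w} (1/32)"
proof (rule has_density_approx)
  show "has_density {m. \<exists>w\<le>W. int m mod 2^(w+6) = a_res w} (\<Sum>w\<le>W. 1 / 2^(w+6))" for W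
    by (rule has_density_return_classes_upto)
  show "has_density {m. [243 * int m + 119 = 0] (mod 2^(W+1))} (1 / 2^(W+1))" for W
    by (rule has_density_v2_above)
  show "(\<lambda>W. \<Sum>w\<le>W. 1 / (2::real)^(w+6)) \<longlonglongrightarrow> 1/32"
    using geometric_sums_pow2_shift unfolding sums_def_le .
  show "(\<lambda>W. 1 / (2::real)^(W+1)) \<longlonglongrightarrow> 0"
    using LIMSEQ_Suc[OF LIMSEQ_inverse_realpow_zero[of "2::real"]] by (simp add: inverse_eq_divide)
  show "{m. \<exists>w. int m mod 2^(w+6) = a_res w} \<subseteq>
        {m. \<exists>w\<le>W. int m mod 2^(w+6) = a_res w} \<union> {m. [243 * int m + 119 = 0] (mod 2^(W+1))}" for W
  proof (intro subsetI, elim CollectE exE)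
    fix m w assume "int m mod 2^(w+6) = a_res w"
    then show "m \<in> {m. \<exists>w\<le>W. int m mod 2^(w+6) = a_res w} \<union> {m. [243 * int m + 119 = 0] (mod 2^(W+1))}"
      using return_class_v2_above[of m w W] by (cases "w \<le> W") auto
  qed
qed auto

theorem mainTheorem8:
  shows
  "(\<forall>m::nat.
      (syr ^^ 4) (512*m+249) = 648*m+317 \<and>
      3 * (syr ^^ 4) (512*m+249) + 1 = 8 * (243*m+119) \<and>
      (syr ^^ 5) (512*m+249) = (243*m+119) div 2 ^ v2 (243*m+119) \<and>
      ((syr ^^ 5) (512*m+249) mod 64 = 57 \<longleftrightarrow>
         [243*m+119 = 57 * 2 ^ v2 (243*m+119)] (mod 2 ^ (v2 (243*m+119) + 6)))) \<and>
   (\<forall>w::nat. \<exists>!a::int. 0 \<le> a \<and> a < 2^(w+6) \<and>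
      (\<forall>m::nat. ((syr ^^ 5) (512*m+249) mod 64 = 57 \<and> v2 (243*m+119) = w)
                  \<longleftrightarrow> int m mod 2^(w+6) = a)) \<and>
   (\<forall>w::nat. 0 \<le> a_res w \<and> a_res w < 2^(w+6) \<and>
      (\<forall>m::nat. ((syr ^^ 5) (512*m+249) mod 64 = 57 \<and> v2 (243*m+119) = w)
                  \<longleftrightarrow> int m mod 2^(w+6) = a_res w)) \<and>
   (\<forall>w w' m::nat. w \<noteq> w' \<longrightarrow>
      \<not> (int m mod 2^(w+6) = a_res w \<and> int m mod 2^(w'+6) = a_res w')) \<and>
   (\<forall>m::nat. (syr ^^ 5) (512*m+249) mod 64 = 57 \<longleftrightarrow>
      (\<exists>w. int m mod 2^(w+6) = a_res w)) \<and>
   ((\<lambda>w::nat. 1 / (2::real)^(w+6)) sums (1/32)) \<and>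
   ((\<lambda>N. real (card {m \<in> {..<N}. \<exists>w. int m mod 2^(w+6) = a_res w}) / real N)
      \<longlonglongrightarrow> 1/32) \<and>
   (\<forall>w::nat. \<exists>k0::int. \<forall>t::nat.
      qdest (nat (a_res w) + 2^(w+6) * t) = k0 + 243 * int t) \<and>
   (\<forall>(w::nat) (t0::nat) (r::int). 0 \<le> r \<and> r < 64 \<longrightarrow>
      card {t \<in> {t0..<t0+64}. qdest (nat (a_res w) + 2^(w+6) * t) mod 64 = r} = 1)"
  using syr_funpow4 syr_funpow5 return_iff_cong return_residue_unique a_res_bounds
    return_with_v2_iff return_classes_disjoint return_iff_in_class geometric_sums_pow2_shift
    has_density_returns[unfolded has_density_def relative_count_def]
    qdest_on_class_affine qdest_uniform_mod_64
  by (auto simp del: One_nat_def)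

end
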